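(* (1) If $A\in C^\alpha(\Sigma,\mathbb R)$ then $L(A)\in C^\alpha(\Sigma,\mathbb R)$. (2) The linear map $L:C^\alpha(\Sigma,\mathbb R)\to C^\alpha(\Sigma,\mathbb R)$ is continuous. (3) $\mathcal B\subset\ker L$. (4) $L$ induces a continuous linear map $C^\alpha/\mathcal B\to C^\alpha/\mathcal B^*$. (5) The linear map $L^*:C^\alpha(\Sigma,\mathbb R)\to C^\alpha(\Sigma,\mathbb R)$ is continuous and induces a continuous linear map $C^\alpha/\mathcal B^*\to C^\alpha/\mathcal B$ which is the inverse of the map induced by $L$; in particular $L^*(L(A))\in A+\mathcal B$ for every $A\in C^\alpha$.
   Context: $\Sigma=\{1,\dots,d\}^{\mathbb N}$ with metric $d(\omega,\nu)=\lambda^N$, $N=\min\{k:\omega_k\ne\nu_k\}$, $0<\lambda<1$; $C^\alpha(\Sigma,\mathbb R)$ with norm $\|F\|_\alpha=\sup|F|+\sup_{x\ne y}|F(x)-F(y)|/d(x,y)^\alpha$. $T$ denotes the shift on the first factor (points $x$), $\sigma$ the shift on the second factor (points $\omega$) of $\Sigma\times\Sigma$. For $u,v\in\Sigma$ let $\tau_u(v)=(u_0,v_0,v_1,\dots)$, and for $n\ge1$, $\tau^{(n)}_u(v)=(u_{n-1},\dots,u_1,u_0,v_0,v_1,\dots)$, $\tau^{(0)}_u=\mathrm{id}$. Fix $\bar x,\bar\omega\in\Sigma$. For $A\in C^\alpha$ define $L(A)=A^*$ by $A^*(\omega)=A(\tau_\omega\bar x)+\sum_{n\ge1}[A(\tau^{(n+1)}_\omega\bar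 x)-A(\tau^{(n)}_{\sigma\omega}\bar x)]$ (this is the dual potential: with $W_A(x,\omega)=\sum_{n\ge1}[A(\tau^{(n)}_\omega x)-A(\tau^{(n)}_\omega\bar x)]$ one has $A^*(\omega)=A(\tau_\omega x)+W_A(\tau_\omega x,\sigma\omega)-W_A(x,\omega)$ for all $x$). For $\psi\in C^\alpha$ define $L^*(\psi)(x)=\psi(\tau_x\bar\omega)+\sum_{n\ge1}[\psi(\tau^{(n+1)}_x\bar\omega)-\psi(\tau^{(n)}_{Tx}\bar\omega)]$. $\mathcal B=\{u\circ T-u:u\in C^\alpha\}$ and $\mathcal B^*=\{u\circ\sigma-u:u\in C^\alpha\}$ (closed subspaces of $C^\alpha$), with quotient norms $[z+\mathcal B]_\alpha=\inf_{b\in\mathcal B}\|z+b\|_\alpha$. *)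

theory Defs
  imports "HOL-Analysis.Analysis"
begin

text \<open>The symbolic space Sigma = {1..d}^N is modelled as the type nat => 'a, where
  'a is an arbitrary finite (nonempty) alphabet of size d = CARD('a).
  Coordinates are indexed from 0.\<close>

definition sdist :: "real \<Rightarrow> (nat \<Rightarrow> 'a) \<Rightarrow> (nat \<Rightarrow> 'a) \<Rightarrow> real" where
  "sdist lam x y = (if x = y then 0 else lam ^ (LEAST k. x k \<noteq> y k))"

text \<open>The shift (T on the first factor, sigma on the second factor; both are the shift on Sigma).\<close>
definition shift :: "(nat \<Rightarrow> 'a) \<Rightarrow> (nat \<Rightarrow> 'a)" where
  "shift x = (\<lambda>k. x (Suc k))"

text \<open>tau n u v = (u_{n-1},...,u_0,v_0,v_1,...); tau 0 u = id, tau 1 u = tau_u.\<close>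
definition tau :: "nat \<Rightarrow> (nat \<Rightarrow> 'a) \<Rightarrow> (nat \<Rightarrow> 'a) \<Rightarrow> (nat \<Rightarrow> 'a)" where
  "tau n u v = (\<lambda>k. if k < n then u (n - 1 - k) else v (k - n))"

definition holder_quot_set :: "real \<Rightarrow> real \<Rightarrow> ((nat \<Rightarrow> 'a) \<Rightarrow> real) \<Rightarrow> real set" where
  "holder_quot_set lam al F =
     {\<bar>F x - F y\<bar> / (sdist lam x y powr al) | x y. x \<noteq> y}"

definition holder_space :: "real \<Rightarrow> real \<Rightarrow> ((nat \<Rightarrow> 'a) \<Rightarrow> real) set" where
  "holder_space lam al =
     {F. bounded (range F) \<and> bdd_above (holder_quot_set lam al F)}"

text \<open>||F||_alpha = sup |F| + Hoelder constant (0 is inserted only to make the sup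
  well-defined when there are no pairs x ~= y; all quantities are nonnegative).\<close>
definition holder_norm :: "real \<Rightarrow> real \<Rightarrow> ((nat \<Rightarrow> 'a) \<Rightarrow> real) \<Rightarrow> real" where
  "holder_norm lam al F =
     Sup (range (\<lambda>x. \<bar>F x\<bar>)) + Sup (insert 0 (holder_quot_set lam al F))"

text \<open>B = {u o T - u : u in C^alpha} (and B* = {u o sigma - u}, the same set of functions on Sigma).\<close>
definition coboundaries :: "real \<Rightarrow> real \<Rightarrow> ((nat \<Rightarrow> 'a) \<Rightarrow> real) set" where
  "coboundaries lam al = {(\<lambda>x. u (shift x) - u x) | u. u \<in> holder_space lam al}"

definition quot_norm ::
  "real \<Rightarrow> real \<Rightarrow> ((nat \<Rightarrow> 'a) \<Rightarrow> real) set \<Rightarrow> ((nat \<Rightarrow> 'a) \<Rightarrow> real) \<Rightarrow> real" where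
  "quot_norm lam al Bs z = Inf {holder_norm lam al (\<lambda>x. z x + b x) | b. b \<in> Bs}"

text \<open>The dual-potential operator with base point p:
  dual_op p A w = A(tau_w p) + sum_{n>=1} [A(tau^{(n+1)}_w p) - A(tau^{(n)}_{shift w} p)].
  L = dual_op xbar, L* = dual_op wbar.\<close>
definition dual_op :: "(nat \<Rightarrow> 'a) \<Rightarrow> ((nat \<Rightarrow> 'a) \<Rightarrow> real) \<Rightarrow> ((nat \<Rightarrow> 'a) \<Rightarrow> real)" where
  "dual_op p A = (\<lambda>w. A (tau 1 w p) +
      (\<Sum>n. A (tau (Suc n + 1) w p) - A (tau (Suc n) (shift w) p)))"

end

theory Submission
  imports Defs
begin

section \<open>Hoelder functions on sequence space\<close>

definition agree :: "nat \<Rightarrow> (nat \<Rightarrow> 'a) \<Rightarrow> (nat \<Rightarrow> 'a) \<Rightarrow> bool" where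
  "agree n x y \<longleftrightarrow> (\<forall>k<n. x k = y k)"

definition hol :: "real \<Rightarrow> real \<Rightarrow> ((nat \<Rightarrow> 'a) \<Rightarrow> real) \<Rightarrow> real" where
  "hol lam al F = Sup (insert 0 (holder_quot_set lam al F))"

definition supn :: "((nat \<Rightarrow> 'a) \<Rightarrow> real) \<Rightarrow> real" where
  "supn F = Sup (range (\<lambda>x. \<bar>F x\<bar>))"

lemma holder_norm_eq: "holder_norm lam al F = supn F + hol lam al F"
  by (simp add: holder_norm_def supn_def hol_def)

lemma agree_0 [simp]: "agree 0 x y"
  by (simp add: agree_def)

lemma agree_shift: "agree (Suc n) x y \<Longrightarrow> agree n (shift x) (shift y)"
  by (simp add: agree_def shift_def)

lemma rate_bounds: "0 < (lam::real) \<Longrightarrow> lam < 1 \<Longrightarrow> 0 < al \<Longrightarrow> 0 < lam powr al \<and> lam powr al < 1"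
  by (simp add: powr01_less_one)

lemma powr_power_swap: "0 < (lam::real) \<Longrightarrow> (lam ^ n) powr al = (lam powr al) ^ n"
  by (simp add: powr_realpow[symmetric] powr_powr powr_power mult.commute)

lemma sdist_le_of_agree:
  assumes "0 < lam" "lam < 1" "agree n x y"
  shows "sdist lam x y \<le> lam ^ n"
proof (cases "x = y")
  case True thus ?thesis using assms by (simp add: sdist_def)
next
  case False
  then obtain k where "x k \<noteq> y k" by auto
  hence "x (LEAST k. x k \<noteq> y k) \<noteq> y (LEAST k. x k \<noteq> y k)" by (rule LeastI)
  hence "n \<le> (LEAST k. x k \<noteq> y k)" using assms(3) unfolding agree_def by (meson not_le)
  thus ?thesis using False assms by (simp add: sdist_def power_decreasing)
qed

lemma sdist_first_difference:
  assumes "x \<noteq> y"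
  shows "agree (LEAST k. x k \<noteq> y k) x y \<and> sdist lam x y = lam ^ (LEAST k. x k \<noteq> y k)"
  using assms not_less_Least unfolding agree_def sdist_def by auto

lemma hol_nonneg: "F \<in> holder_space lam al \<Longrightarrow> 0 \<le> hol lam al F"
  unfolding hol_def holder_space_def by (intro cSup_upper) auto

lemma abs_le_supn:
  assumes "F \<in> holder_space lam al"
  shows "\<bar>F x\<bar> \<le> supn F"
proof -
  from assms obtain a where "\<forall>y\<in>range F. norm y \<le> a"
    by (auto simp: holder_space_def bounded_iff)
  hence "bdd_above (range (\<lambda>x. \<bar>F x\<bar>))" by (auto intro!: bdd_aboveI)
  thus ?thesis unfolding supn_def by (intro cSUP_upper) auto
qed

lemma holder_norm_nonneg: "F \<in> holder_space lam al \<Longrightarrow> 0 \<le> holder_norm lam al F"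
  using hol_nonneg[of F] abs_le_supn[of F] unfolding holder_norm_eq
  by (meson abs_ge_zero add_nonneg_nonneg order_trans)

lemma holder_bound:
  assumes l: "0 < lam" "lam < 1" and a: "0 < al" and F: "F \<in> holder_space lam al"
    and ag: "agree n x y"
  shows "\<bar>F x - F y\<bar> \<le> hol lam al F * (lam powr al) ^ n"
proof (cases "x = y")
  case True thus ?thesis using hol_nonneg[OF F] l by simp
next
  case False
  have sp: "0 < sdist lam x y" using False l by (simp add: sdist_def)
  have "\<bar>F x - F y\<bar> / (sdist lam x y powr al) \<in> holder_quot_set lam al F"
    using False unfolding holder_quot_set_def by blast
  hence "\<bar>F x - F y\<bar> / (sdist lam x y powr al) \<le> hol lam al F"
    using F unfolding hol_def holder_space_def by (intro cSup_upper) auto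
  hence "\<bar>F x - F y\<bar> \<le> hol lam al F * sdist lam x y powr al"
    using sp by (simp add: divide_le_eq)
  also have "\<dots> \<le> hol lam al F * (lam ^ n) powr al"
    using sdist_le_of_agree[OF l ag] sp a hol_nonneg[OF F]
    by (intro mult_left_mono powr_mono2) auto
  finally show ?thesis using l by (simp add: powr_power_swap)
qed

lemma holder_intro:
  assumes l: "0 < lam" "lam < 1" and a: "0 < al"
    and sup_bound: "\<And>x. \<bar>F x\<bar> \<le> B1" and B2: "0 \<le> B2"
    and var_bound: "\<And>n x y. agree n x y \<Longrightarrow> \<bar>F x - F y\<bar> \<le> B2 * (lam powr al) ^ n"
  shows "F \<in> holder_space lam al \<and> holder_norm lam al F \<le> B1 + B2"
proof -
  have quot: "v \<le> B2" if "v \<in> holder_quot_set lam al F" for v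
  proof -
    from that obtain x y where v: "v = \<bar>F x - F y\<bar> / (sdist lam x y powr al)" and xy: "x \<noteq> y"
      unfolding holder_quot_set_def by blast
    define k where "k = (LEAST k. x k \<noteq> y k)"
    have ag: "agree k x y" and sd: "sdist lam x y = lam ^ k"
      using sdist_first_difference[OF xy, of lam] k_def by auto
    have "\<bar>F x - F y\<bar> \<le> B2 * (lam powr al) ^ k" by (rule var_bound[OF ag])
    thus ?thesis using v sd l by (simp add: powr_power_swap divide_le_eq)
  qed
  have "bounded (range F)" using sup_bound by (auto simp: bounded_iff)
  moreover have "bdd_above (holder_quot_set lam al F)" using quot by (auto intro!: bdd_aboveI)
  moreover have "supn F \<le> B1" unfolding supn_def by (intro cSUP_least) (auto intro: sup_bound)
  moreover have "hol lam al F \<le> B2" unfolding hol_def using quot B2 by (intro cSup_least) auto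
  ultimately show ?thesis by (simp add: holder_space_def holder_norm_eq)
qed

lemma holder_lin:
  assumes l: "0 < lam" "lam < 1" and a: "0 < al"
    and A: "A \<in> holder_space lam al" and B: "B \<in> holder_space lam al"
  shows "(\<lambda>x. s * A x + t * B x) \<in> holder_space lam al"
proof -
  let ?r = "lam powr al"
  have "(\<lambda>x. s * A x + t * B x) \<in> holder_space lam al \<and> holder_norm lam al (\<lambda>x. s * A x + t * B x)
     \<le> (\<bar>s\<bar> * supn A + \<bar>t\<bar> * supn B) + (\<bar>s\<bar> * hol lam al A + \<bar>t\<bar> * hol lam al B)"
  proof (rule holder_intro[OF l a])
    fix x
    have "\<bar>s * A x + t * B x\<bar> \<le> \<bar>s\<bar> * \<bar>A x\<bar> + \<bar>t\<bar> * \<bar>B x\<bar>"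
      by (simp add: abs_mult abs_triangle_ineq[THEN order_trans])
    also have "\<dots> \<le> \<bar>s\<bar> * supn A + \<bar>t\<bar> * supn B"
      by (intro add_mono mult_left_mono abs_le_supn[OF A] abs_le_supn[OF B]) auto
    finally show "\<bar>s * A x + t * B x\<bar> \<le> \<bar>s\<bar> * supn A + \<bar>t\<bar> * supn B" .
  next
    show "0 \<le> \<bar>s\<bar> * hol lam al A + \<bar>t\<bar> * hol lam al B"
      using hol_nonneg[OF A] hol_nonneg[OF B] by simp
  next
    fix n and x y :: "nat \<Rightarrow> 'a" assume ag: "agree n x y"
    have "(s * A x + t * B x) - (s * A y + t * B y) = s * (A x - A y) + t * (B x - B y)"
      by (simp add: algebra_simps)
    hence "\<bar>(s * A x + t * B x) - (s * A y + t * B y)\<bar> \<le> \<bar>s\<bar> * \<bar>A x - A y\<bar> + \<bar>t\<bar> * \<bar>B x - B y\<bar>"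
      by (simp add: abs_mult abs_triangle_ineq[THEN order_trans])
    also have "\<dots> \<le> \<bar>s\<bar> * (hol lam al A * ?r ^ n) + \<bar>t\<bar> * (hol lam al B * ?r ^ n)"
      by (intro add_mono mult_left_mono holder_bound[OF l a A ag] holder_bound[OF l a B ag]) auto
    finally show "\<bar>(s * A x + t * B x) - (s * A y + t * B y)\<bar>
        \<le> (\<bar>s\<bar> * hol lam al A + \<bar>t\<bar> * hol lam al B) * ?r ^ n"
      by (simp add: algebra_simps)
  qed
  thus ?thesis by simp
qed

lemma holder_diff:
  assumes "0 < lam" "lam < 1" "0 < al" "A \<in> holder_space lam al" "B \<in> holder_space lam al"
  shows "(\<lambda>x. A x - B x) \<in> holder_space lam al"
  using holder_lin[OF assms, of 1 "-1"] by simp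

lemma holder_add:
  assumes "0 < lam" "lam < 1" "0 < al" "A \<in> holder_space lam al" "B \<in> holder_space lam al"
  shows "(\<lambda>x. A x + B x) \<in> holder_space lam al"
  using holder_lin[OF assms, of 1 1] by simp

lemma holder_shift:
  assumes l: "0 < lam" "lam < 1" and a: "0 < al" and u: "u \<in> holder_space lam al"
  shows "(\<lambda>x. u (shift x)) \<in> holder_space lam al"
proof -
  let ?r = "lam powr al" and ?H = "hol lam al u"
  have r: "0 < ?r" "?r < 1" using rate_bounds[OF l a] by auto
  have H: "0 \<le> ?H" by (rule hol_nonneg[OF u])
  have "(\<lambda>x. u (shift x)) \<in> holder_space lam al
      \<and> holder_norm lam al (\<lambda>x. u (shift x)) \<le> supn u + ?H / ?r"
  proof (rule holder_intro[OF l a])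
    show "\<bar>u (shift x)\<bar> \<le> supn u" for x by (rule abs_le_supn[OF u])
    show "0 \<le> ?H / ?r" using H r by simp
    fix n and x y :: "nat \<Rightarrow> 'a" assume ag: "agree n x y"
    show "\<bar>u (shift x) - u (shift y)\<bar> \<le> ?H / ?r * ?r ^ n"
    proof (cases n)
      case 0
      have "\<bar>u (shift x) - u (shift y)\<bar> \<le> ?H * ?r ^ 0" by (rule holder_bound[OF l a u]) simp
      also have "\<dots> \<le> ?H / ?r" using H r by (simp add: le_divide_eq mult_left_le)
      finally show ?thesis using 0 by simp
    next
      case (Suc m)
      have "\<bar>u (shift x) - u (shift y)\<bar> \<le> ?H * ?r ^ m"
        using ag Suc by (intro holder_bound[OF l a u] agree_shift) simp
      thus ?thesis using Suc r by simp
    qed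
  qed
  thus ?thesis by simp
qed

lemma coboundary_holder:
  assumes l: "0 < lam" "lam < 1" and a: "0 < al" and b: "b \<in> coboundaries lam al"
  shows "b \<in> holder_space lam al"
  using b holder_diff[OF l a holder_shift[OF l a]] unfolding coboundaries_def by blast

lemma zero_coboundary:
  assumes l: "0 < lam" "lam < 1" and a: "0 < al"
  shows "(\<lambda>x::nat\<Rightarrow>'a. 0) \<in> coboundaries lam al"
proof -
  have "(\<lambda>x::nat\<Rightarrow>'a. 0) \<in> holder_space lam al \<and> holder_norm lam al (\<lambda>x::nat\<Rightarrow>'a. 0) \<le> 0 + 0"
    by (rule holder_intro[OF l a]) auto
  thus ?thesis unfolding coboundaries_def by force
qed

section \<open>Geometric series estimates\<close>

lemma geometric_tail_bound:
  fixes f :: "nat \<Rightarrow> real"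
  assumes r: "0 \<le> r" "r < 1" and c: "0 \<le> c"
    and b: "\<And>n. \<bar>f n\<bar> \<le> (if m \<le> n then c * r ^ n else 0)"
  shows "summable f \<and> \<bar>suminf f\<bar> \<le> c * r ^ m / (1 - r)"
proof -
  have "\<bar>f n\<bar> \<le> c * r ^ n" for n using b[of n] r c by (auto split: if_splits)
  hence sf: "summable f"
    by (intro summable_comparison_test[OF _ summable_mult[OF summable_geometric]]) (use r in auto)
  have "f i = 0" if "i < m" for i using b[of i] that by simp
  hence "suminf f = (\<Sum>n. f (n + m))" using suminf_split_initial_segment[OF sf, of m] by simp
  moreover have bound: "\<bar>f (n + m)\<bar> \<le> c * r ^ m * r ^ n" for n
    using b[of "n + m"] by (simp add: power_add mult_ac)
  moreover have g: "summable (\<lambda>n. c * r ^ m * r ^ n)"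
    using r by (simp add: summable_geometric summable_mult)
  moreover have tail: "summable (\<lambda>n. f (n + m))" using sf by (rule summable_ignore_initial_segment)
  moreover have "(\<Sum>n. f (n + m)) \<le> (\<Sum>n. c * r ^ m * r ^ n)"
    using bound by (intro suminf_le[OF _ tail g]) (simp add: abs_le_iff)
  moreover have "(\<Sum>n. - (c * r ^ m * r ^ n)) \<le> (\<Sum>n. f (n + m))"
    using bound by (intro suminf_le[OF _ summable_minus[OF g] tail]) (smt (verit))
  ultimately have "\<bar>suminf f\<bar> \<le> (\<Sum>n. c * r ^ m * r ^ n)"
    using suminf_minus[OF g] by (simp add: abs_le_iff)
  also have "\<dots> = c * r ^ m / (1 - r)" using r by (simp add: suminf_mult suminf_geometric)
  finally show ?thesis using sf by simp
qed

lemma geometric_tendsto_zero: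
  assumes l: "0 < lam" "lam < 1" and a: "0 < al" and f: "\<And>n. \<bar>f n\<bar> \<le> C * (lam powr al) ^ n"
  shows "f \<longlonglongrightarrow> (0::real)"
proof (rule Lim_null_comparison)
  show "\<forall>\<^sub>F n in sequentially. norm (f n) \<le> C * (lam powr al) ^ n" using f by simp
  have "(\<lambda>n. (lam powr al) ^ n) \<longlonglongrightarrow> 0" using rate_bounds[OF l a] by (intro LIMSEQ_power_zero) auto
  thus "(\<lambda>n. C * (lam powr al) ^ n) \<longlonglongrightarrow> 0" by (intro tendsto_mult_right_zero)
qed

section \<open>The dual operator at a general base point\<close>

lemma tau_0 [simp]: "tau 0 u v = v"
  by (simp add: tau_def)

lemma shift_tau: "shift (tau (Suc n) u v) = tau n u v"
  by (auto simp: shift_def tau_def fun_eq_iff Suc_diff_le)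

text \<open>The shift undoes tau_u; stated for both 1 and Suc 0, since the simplifier
  produces either form.\<close>
lemma shift_tau_1: "shift (tau 1 u v) = v" "shift (tau (Suc 0) u v) = v"
  using shift_tau[of 0 u v] by simp_all

lemma tau_eq_of_agree: "agree k w w' \<Longrightarrow> n \<le> k \<Longrightarrow> tau n w p = tau n w' p"
  by (auto simp: agree_def tau_def fun_eq_iff)

lemma agree_tau_tail: "agree m x y \<Longrightarrow> agree (n + m) (tau n u x) (tau n u y)"
  by (auto simp: agree_def tau_def)

text \<open>tau^{(N+1)}_w p and tau^{(N)}_{shift w} p share the prefix w_{N},...,w_1; this controls
  both the terms of the series and the telescoping remainders below.\<close>
lemma agree_tau_shift: "agree N (tau (Suc N) w p) (tau N (shift w) p)"
  by (auto simp: agree_def tau_def shift_def Suc_diff_Suc)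

lemma tau_shift_tau_1:
  "tau n (shift w) (tau 1 w x) = tau (Suc n) w x" "tau n (shift w) (tau (Suc 0) w x) = tau (Suc n) w x"
  by (auto simp: tau_def shift_def fun_eq_iff Suc_diff_Suc)

definition dterm :: "(nat \<Rightarrow> 'a) \<Rightarrow> ((nat \<Rightarrow> 'a) \<Rightarrow> real) \<Rightarrow> (nat \<Rightarrow> 'a) \<Rightarrow> nat \<Rightarrow> real" where
  "dterm p A w n = A (tau (Suc n + 1) w p) - A (tau (Suc n) (shift w) p)"

lemma dual_op_dterm: "dual_op p A w = A (tau 1 w p) + suminf (dterm p A w)"
  unfolding dual_op_def dterm_def[abs_def] by simp

lemma dterm_bound:
  assumes l: "0 < lam" "lam < 1" and a: "0 < al" and A: "A \<in> holder_space lam al"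
  shows "\<bar>dterm p A w n\<bar> \<le> (hol lam al A * lam powr al) * (lam powr al) ^ n"
  using holder_bound[OF l a A agree_tau_shift[of "Suc n" w p]]
  by (simp add: dterm_def mult_ac)

lemma dterm_summable:
  assumes l: "0 < lam" "lam < 1" and a: "0 < al" and A: "A \<in> holder_space lam al"
  shows "summable (dterm p A w)
    \<and> \<bar>suminf (dterm p A w)\<bar> \<le> hol lam al A * lam powr al / (1 - lam powr al)"
  using geometric_tail_bound[of "lam powr al" "hol lam al A * lam powr al" "dterm p A w" 0]
    rate_bounds[OF l a] hol_nonneg[OF A] dterm_bound[OF l a A] by simp

lemma dterm_eq_of_agree:
  assumes ag: "agree k w w'" and n: "\<not> k - 1 \<le> n"
  shows "dterm p A w n = dterm p A w' n"
proof -
  have "tau (Suc n + 1) w p = tau (Suc n + 1) w' p" using ag n by (intro tau_eq_of_agree) auto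
  moreover have "tau (Suc n) (shift w) p = tau (Suc n) (shift w') p"
    using ag n by (intro tau_eq_of_agree[of "k - 1"] agree_shift) auto
  ultimately show ?thesis by (simp add: dterm_def)
qed

text \<open>Variation of dual_op p A at depth k: the first term varies like A, and the series
  terms with index below k - 1 coincide for w and w'.\<close>
lemma dual_op_variation:
  assumes l: "0 < lam" "lam < 1" and a: "0 < al" and A: "A \<in> holder_space lam al"
    and ag: "agree k w w'"
  shows "\<bar>dual_op p A w - dual_op p A w'\<bar>
    \<le> hol lam al A * (1 + 2 / (1 - lam powr al)) * (lam powr al) ^ k"
proof -
  define r where "r = lam powr al"
  define H where "H = hol lam al A"
  have r: "0 < r" "r < 1" using rate_bounds[OF l a] r_def by auto
  have H: "0 \<le> H" using hol_nonneg[OF A] H_def by simp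
  have first: "\<bar>A (tau 1 w p) - A (tau 1 w' p)\<bar> \<le> H * r ^ k"
  proof (cases k)
    case 0 thus ?thesis using holder_bound[OF l a A agree_0] H_def r_def by simp
  next
    case (Suc m)
    have "tau 1 w p = tau 1 w' p" using ag Suc by (intro tau_eq_of_agree) auto
    thus ?thesis using H r by simp
  qed
  define d where "d n = dterm p A w n - dterm p A w' n" for n
  have d_bound: "\<bar>d n\<bar> \<le> (if k - 1 \<le> n then (2 * H * r) * r ^ n else 0)" for n
  proof (cases "k - 1 \<le> n")
    case True
    have "\<bar>d n\<bar> \<le> \<bar>dterm p A w n\<bar> + \<bar>dterm p A w' n\<bar>" unfolding d_def by (rule abs_triangle_ineq4)
    also have "\<dots> \<le> H * r * r ^ n + H * r * r ^ n"
      using dterm_bound[OF l a A] H_def r_def by (intro add_mono) auto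
    finally show ?thesis using True by simp
  qed (use dterm_eq_of_agree[OF ag] in \<open>simp add: d_def\<close>)
  have "\<bar>suminf d\<bar> \<le> (2 * H * r) * r ^ (k - 1) / (1 - r)"
    using geometric_tail_bound[OF _ _ _ d_bound] r H by auto
  also have "\<dots> \<le> 2 * H * r ^ k / (1 - r)"
  proof -
    have "r * r ^ (k - 1) \<le> r ^ k" using r by (cases k) auto
    thus ?thesis using r H by (intro divide_right_mono) (auto simp: mult_left_mono mult.assoc)
  qed
  finally have series: "\<bar>suminf d\<bar> \<le> 2 * H * r ^ k / (1 - r)" .
  have "suminf d = suminf (dterm p A w) - suminf (dterm p A w')"
    unfolding d_def using dterm_summable[OF l a A, of p w] dterm_summable[OF l a A, of p w']
    by (simp add: suminf_diff)
  hence "\<bar>dual_op p A w - dual_op p A w'\<bar> = \<bar>(A (tau 1 w p) - A (tau 1 w' p)) + suminf d\<bar>"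
    by (simp add: dual_op_dterm)
  also have "\<dots> \<le> H * r ^ k + 2 * H * r ^ k / (1 - r)"
    using first series by (meson abs_triangle_ineq add_mono order_trans)
  also have "\<dots> = H * (1 + 2 / (1 - r)) * r ^ k" using r by (simp add: field_simps)
  finally show ?thesis by (simp add: H_def r_def)
qed

definition dual_bound :: "real \<Rightarrow> real \<Rightarrow> real" where
  "dual_bound lam al = 1 + 3 / (1 - lam powr al)"

lemma dual_bound_pos: "0 < lam \<Longrightarrow> lam < 1 \<Longrightarrow> 0 < al \<Longrightarrow> 0 < dual_bound lam al"
  using rate_bounds[of lam al] unfolding dual_bound_def by (simp add: add_pos_pos)

text \<open>The sup bound and Hoelder constant obtained for dual_op p A are dominated by
  dual_bound times the norm M + H of A.\<close>
lemma dual_bound_dominates: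
  fixes r H M :: real
  assumes r: "0 < r" "r < 1" and H: "0 \<le> H" and M: "0 \<le> M" and r_def: "r = lam powr al"
  shows "(M + H * r / (1 - r)) + H * (1 + 2 / (1 - r)) \<le> dual_bound lam al * (M + H)"
proof -
  define t where "t = 1 / (1 - r)"
  have t: "0 < t" using r t_def by simp
  have "H * r / (1 - r) = H * t * r" by (simp add: t_def)
  also have "\<dots> \<le> H * t" using H t r by (intro mult_left_le) auto
  finally have "H * r / (1 - r) \<le> H * t" .
  moreover have "H * (1 + 2 / (1 - r)) = H + 2 * H * t" by (simp add: t_def algebra_simps)
  moreover have "dual_bound lam al * (M + H) = (1 + 3 * t) * (M + H)"
    by (simp add: dual_bound_def t_def r_def)
  moreover have "0 \<le> M * t" using M t by simp
  ultimately show ?thesis by (simp add: algebra_simps)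
qed

lemma dual_op_holder:
  assumes l: "0 < lam" "lam < 1" and a: "0 < al" and A: "A \<in> holder_space lam al"
  shows "dual_op p A \<in> holder_space lam al
    \<and> holder_norm lam al (dual_op p A) \<le> dual_bound lam al * holder_norm lam al A"
proof -
  define r where "r = lam powr al"
  define H where "H = hol lam al A"
  define M where "M = supn A"
  have r: "0 < r" "r < 1" using rate_bounds[OF l a] r_def by auto
  have H: "0 \<le> H" using hol_nonneg[OF A] H_def by simp
  have M: "0 \<le> M" using abs_le_supn[OF A] M_def by (meson abs_ge_zero order_trans)
  have "dual_op p A \<in> holder_space lam al
      \<and> holder_norm lam al (dual_op p A) \<le> (M + H * r / (1 - r)) + H * (1 + 2 / (1 - r))"
  proof (rule holder_intro[OF l a])
    fix w
    have "\<bar>dual_op p A w\<bar> \<le> \<bar>A (tau 1 w p)\<bar> + \<bar>suminf (dterm p A w)\<bar>"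
      by (simp add: dual_op_dterm abs_triangle_ineq)
    also have "\<dots> \<le> M + H * r / (1 - r)"
      using abs_le_supn[OF A] dterm_summable[OF l a A] M_def H_def r_def by (intro add_mono) auto
    finally show "\<bar>dual_op p A w\<bar> \<le> M + H * r / (1 - r)" .
  next
    show "0 \<le> H * (1 + 2 / (1 - r))" using H r by simp
  next
    show "\<bar>dual_op p A w - dual_op p A w'\<bar> \<le> H * (1 + 2 / (1 - r)) * (lam powr al) ^ k"
      if "agree k w w'" for k w w'
      using dual_op_variation[OF l a A that] H_def r_def by simp
  qed
  moreover have "(M + H * r / (1 - r)) + H * (1 + 2 / (1 - r)) \<le> dual_bound lam al * (M + H)"
    using dual_bound_dominates[OF r H M] by (simp add: r_def)
  ultimately show ?thesis by (simp add: holder_norm_eq M_def H_def)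
qed

lemma dual_op_lin:
  assumes l: "0 < lam" "lam < 1" and a: "0 < al"
    and A: "A \<in> holder_space lam al" and B: "B \<in> holder_space lam al"
  shows "dual_op p (\<lambda>x. s * A x + t * B x) = (\<lambda>w. s * dual_op p A w + t * dual_op p B w)"
proof
  fix w
  have sA: "summable (dterm p A w)" and sB: "summable (dterm p B w)"
    using dterm_summable[OF l a A] dterm_summable[OF l a B] by auto
  have "dterm p (\<lambda>x. s * A x + t * B x) w = (\<lambda>n. s * dterm p A w n + t * dterm p B w n)"
    by (simp add: dterm_def fun_eq_iff algebra_simps)
  hence "suminf (dterm p (\<lambda>x. s * A x + t * B x) w) = s * suminf (dterm p A w) + t * suminf (dterm p B w)"
    by (simp add: suminf_add[symmetric] suminf_mult summable_mult sA sB)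
  thus "dual_op p (\<lambda>x. s * A x + t * B x) w = s * dual_op p A w + t * dual_op p B w"
    by (simp add: dual_op_dterm algebra_simps)
qed

lemma dual_op_diff:
  assumes "0 < lam" "lam < 1" "0 < al" "A \<in> holder_space lam al" "B \<in> holder_space lam al"
  shows "dual_op p (\<lambda>x. A x - B x) = (\<lambda>w. dual_op p A w - dual_op p B w)"
  using dual_op_lin[OF assms, of p 1 "-1"] by simp

lemma dual_op_add:
  assumes "0 < lam" "lam < 1" "0 < al" "A \<in> holder_space lam al" "B \<in> holder_space lam al"
  shows "dual_op p (\<lambda>x. A x + B x) = (\<lambda>w. dual_op p A w + dual_op p B w)"
  using dual_op_lin[OF assms, of p 1 1] by simp

section \<open>Coboundaries lie in the kernel\<close>

text \<open>Part (3): the partial sums of the series for a coboundary u o shift - u telescope to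
  u(tau^{(N)}_{shift w} p) - u(tau^{(N+1)}_w p) minus the first term, and the remainder vanishes.\<close>
lemma dual_op_coboundary:
  assumes l: "0 < lam" "lam < 1" and a: "0 < al" and u: "u \<in> holder_space lam al"
  shows "dual_op p (\<lambda>x. u (shift x) - u x) = (\<lambda>w. 0)"
proof
  fix w
  define b where "b = (\<lambda>x. u (shift x) - u x)"
  have partial: "(\<Sum>n<N. dterm p b w n) = u (tau N (shift w) p) - u (tau (Suc N) w p) - b (tau 1 w p)" for N
  proof (induction N)
    case 0 thus ?case by (simp add: b_def shift_tau_1)
  next
    case (Suc N) thus ?case by (simp add: dterm_def b_def shift_tau)
  qed
  have "(\<lambda>N. u (tau N (shift w) p) - u (tau (Suc N) w p)) \<longlonglongrightarrow> 0"
    using holder_bound[OF l a u agree_tau_shift] 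
    by (intro geometric_tendsto_zero[OF l a]) (simp add: abs_minus_commute)
  hence "dterm p b w sums (0 - b (tau 1 w p))"
    unfolding sums_def partial by (intro tendsto_diff tendsto_const)
  hence "suminf (dterm p b w) = - b (tau 1 w p)" by (simp add: sums_iff)
  thus "dual_op p (\<lambda>x. u (shift x) - u x) w = 0" by (simp add: dual_op_dterm b_def[symmetric])
qed

lemma dual_op_coboundaries:
  assumes "0 < lam" "lam < 1" "0 < al" "b \<in> coboundaries lam al"
  shows "dual_op p b = (\<lambda>w. 0)"
  using assms dual_op_coboundary[OF assms(1-3)] unfolding coboundaries_def by blast

section \<open>The transfer function W and the inverse property\<close>

definition W :: "(nat \<Rightarrow> 'a) \<Rightarrow> ((nat \<Rightarrow> 'a) \<Rightarrow> real) \<Rightarrow> (nat \<Rightarrow> 'a) \<Rightarrow> (nat \<Rightarrow> 'a) \<Rightarrow> real" where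
  "W p A y w = suminf (\<lambda>n. A (tau (Suc n) w y) - A (tau (Suc n) w p))"

lemma W_term_bound:
  assumes l: "0 < lam" "lam < 1" and a: "0 < al" and A: "A \<in> holder_space lam al"
  shows "\<bar>A (tau (Suc n) w y) - A (tau (Suc n) w p)\<bar> \<le> (hol lam al A * lam powr al) * (lam powr al) ^ n"
  using holder_bound[OF l a A agree_tau_tail[of 0 y p "Suc n" w]] by (simp add: mult_ac)

lemma W_summable:
  assumes l: "0 < lam" "lam < 1" and a: "0 < al" and A: "A \<in> holder_space lam al"
  shows "summable (\<lambda>n. A (tau (Suc n) w y) - A (tau (Suc n) w p))
    \<and> \<bar>W p A y w\<bar> \<le> hol lam al A * lam powr al / (1 - lam powr al)"
  using geometric_tail_bound[of "lam powr al" "hol lam al A * lam powr al" _ 0]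
    rate_bounds[OF l a] hol_nonneg[OF A] W_term_bound[OF l a A] by (simp add: W_def)

text \<open>W is continuous in its second argument: the first m terms coincide when w and w'
  agree to depth m.\<close>
lemma W_variation:
  assumes l: "0 < lam" "lam < 1" and a: "0 < al" and A: "A \<in> holder_space lam al"
    and ag: "agree m w w'"
  shows "\<bar>W p A y w - W p A y w'\<bar>
    \<le> (2 * hol lam al A * lam powr al) * (lam powr al) ^ m / (1 - lam powr al)"
proof -
  let ?r = "lam powr al" and ?H = "hol lam al A"
  define d where "d n = (A (tau (Suc n) w y) - A (tau (Suc n) w p))
      - (A (tau (Suc n) w' y) - A (tau (Suc n) w' p))" for n
  have d_bound: "\<bar>d n\<bar> \<le> (if m \<le> n then (2 * ?H * ?r) * ?r ^ n else 0)" for n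
  proof (cases "m \<le> n")
    case True
    have "\<bar>d n\<bar> \<le> \<bar>A (tau (Suc n) w y) - A (tau (Suc n) w p)\<bar>
        + \<bar>A (tau (Suc n) w' y) - A (tau (Suc n) w' p)\<bar>"
      unfolding d_def by (rule abs_triangle_ineq4)
    also have "\<dots> \<le> ?H * ?r * ?r ^ n + ?H * ?r * ?r ^ n"
      by (intro add_mono W_term_bound[OF l a A])
    finally show ?thesis using True by (simp add: mult_ac)
  next
    case False
    have "tau (Suc n) w = tau (Suc n) w'" using ag False by (intro ext tau_eq_of_agree) auto
    thus ?thesis using False by (simp add: d_def)
  qed
  have "suminf d = W p A y w - W p A y w'"
    unfolding d_def W_def using W_summable[OF l a A, of w y p] W_summable[OF l a A, of w' y p]
    by (simp add: suminf_diff)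
  thus ?thesis
    using geometric_tail_bound[OF _ _ _ d_bound] rate_bounds[OF l a] hol_nonneg[OF A] by simp
qed

text \<open>-W p A (.) q is Hoelder continuous in its first argument, hence a legitimate
  transfer function u in the definition of coboundaries.\<close>
lemma W_holder:
  assumes l: "0 < lam" "lam < 1" and a: "0 < al" and A: "A \<in> holder_space lam al"
  shows "(\<lambda>y. - W p A y q) \<in> holder_space lam al"
proof -
  let ?r = "lam powr al" and ?H = "hol lam al A"
  have r: "0 < ?r" "?r < 1" using rate_bounds[OF l a] by auto
  have H: "0 \<le> ?H" by (rule hol_nonneg[OF A])
  have "(\<lambda>y. - W p A y q) \<in> holder_space lam al
      \<and> holder_norm lam al (\<lambda>y. - W p A y q) \<le> ?H * ?r / (1 - ?r) + ?H * ?r / (1 - ?r)"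
  proof (rule holder_intro[OF l a])
    show "\<bar>- W p A y q\<bar> \<le> ?H * ?r / (1 - ?r)" for y using W_summable[OF l a A, of q y p] by simp
    show "0 \<le> ?H * ?r / (1 - ?r)" using H r by simp
    fix n and y y' :: "nat \<Rightarrow> 'a" assume ag: "agree n y y'"
    define d where "d k = (A (tau (Suc k) q y) - A (tau (Suc k) q p))
        - (A (tau (Suc k) q y') - A (tau (Suc k) q p))" for k
    have d_bound: "\<bar>d k\<bar> \<le> (if 0 \<le> k then (?H * ?r * ?r ^ n) * ?r ^ k else 0)" for k
    proof -
      have "\<bar>d k\<bar> = \<bar>A (tau (Suc k) q y) - A (tau (Suc k) q y')\<bar>" by (simp add: d_def)
      also have "\<dots> \<le> ?H * ?r ^ (Suc k + n)" by (rule holder_bound[OF l a A agree_tau_tail[OF ag]])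
      finally show ?thesis by (simp add: power_add mult_ac)
    qed
    have "suminf d = W p A y q - W p A y' q"
      unfolding d_def W_def using W_summable[OF l a A, of q y p] W_summable[OF l a A, of q y' p]
      by (simp add: suminf_diff)
    thus "\<bar>- W p A y q - - W p A y' q\<bar> \<le> ?H * ?r / (1 - ?r) * ?r ^ n"
      using geometric_tail_bound[OF _ _ _ d_bound] r H by (simp add: abs_minus_commute)
  qed
  thus ?thesis by simp
qed

lemma dual_op_W_identity:
  assumes l: "0 < lam" "lam < 1" and a: "0 < al" and A: "A \<in> holder_space lam al"
  shows "dual_op p A w = A (tau 1 w y) + W p A (tau 1 w y) (shift w) - W p A y w"
proof -
  define e where "e n = A (tau (Suc n) w y) - A (tau (Suc n) w p)" for n
  define D where "D = suminf (dterm p A w)"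
  have "dterm p A w sums D" using dterm_summable[OF l a A] D_def by (simp add: summable_sums)
  moreover have "(\<lambda>n. e (Suc n) - e n) sums (0 - e 0)"
    by (rule telescope_sums[OF geometric_tendsto_zero[OF l a]])
       (use W_term_bound[OF l a A] in \<open>simp add: e_def\<close>)
  moreover have "e sums W p A y w" unfolding e_def[abs_def] W_def
    using W_summable[OF l a A] by (simp add: summable_sums)
  ultimately have "(\<lambda>n. dterm p A w n + (e (Suc n) - e n) + e n) sums (D + (0 - e 0) + W p A y w)"
    by (intro sums_add)
  moreover have "(\<lambda>n. dterm p A w n + (e (Suc n) - e n) + e n) =
      (\<lambda>n. A (tau (Suc n) (shift w) (tau 1 w y)) - A (tau (Suc n) (shift w) p))"
    by (simp add: fun_eq_iff tau_shift_tau_1 dterm_def e_def)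
  ultimately have "W p A (tau 1 w y) (shift w) = D - e 0 + W p A y w"
    unfolding W_def by (simp add: sums_iff)
  thus ?thesis by (simp add: dual_op_dterm D_def e_def)
qed

definition drop_prefix :: "nat \<Rightarrow> (nat \<Rightarrow> 'a) \<Rightarrow> (nat \<Rightarrow> 'a)" where
  "drop_prefix m y = (\<lambda>k. y (k + m))"

lemma drop_prefix_shift: "drop_prefix m (shift y) = drop_prefix (Suc m) y"
  by (simp add: drop_prefix_def shift_def fun_eq_iff)

lemma drop_prefix_0: "drop_prefix 0 y = y"
  by (simp add: drop_prefix_def)

lemma drop_prefix_1: "drop_prefix (Suc 0) y = shift y"
  by (simp add: drop_prefix_def shift_def)

lemma tau_1_drop_prefix: "tau 1 (tau (Suc m) y q) (drop_prefix (Suc m) y) = drop_prefix m y"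
  by (auto simp: tau_def drop_prefix_def fun_eq_iff)

text \<open>Part (5), the inverse property: for any base points p and q, dual_op q (dual_op p A)
  differs from A by the coboundary of -W p A (.) q.  Evaluating the identity above at the
  points tau^{(m+1)}_y q makes the series for dual_op q telescope.\<close>
lemma dual_op_inverse:
  assumes l: "0 < lam" "lam < 1" and a: "0 < al" and A: "A \<in> holder_space lam al"
  shows "(\<lambda>x. dual_op q (dual_op p A) x - A x) \<in> coboundaries lam al"
proof -
  let ?r = "lam powr al" and ?H = "hol lam al A"
  define \<psi> where "\<psi> = dual_op p A"
  define V where "V y m = W p A (drop_prefix m y) (tau m y q)" for y m
  have \<psi>_at: "\<psi> (tau (Suc m) y q) = A (drop_prefix m y) + V y m - V y (Suc m)" for m y
    using dual_op_W_identity[OF l a A, of p "tau (Suc m) y q" "drop_prefix (Suc m) y"]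
    unfolding tau_1_drop_prefix shift_tau \<psi>_def V_def by simp
  have key: "dual_op q \<psi> x - A x = W p A x q - W p A (shift x) q" for x
  proof -
    define c where "c m = V x (Suc m) - V (shift x) m" for m
    have "c \<longlonglongrightarrow> 0"
    proof (rule geometric_tendsto_zero[OF l a])
      fix m
      have "\<bar>c m\<bar> = \<bar>W p A (drop_prefix (Suc m) x) (tau (Suc m) x q)
          - W p A (drop_prefix (Suc m) x) (tau m (shift x) q)\<bar>"
        by (simp add: c_def V_def drop_prefix_shift)
      also have "\<dots> \<le> (2 * ?H * ?r) * ?r ^ m / (1 - ?r)"
        by (rule W_variation[OF l a A agree_tau_shift])
      finally show "\<bar>c m\<bar> \<le> ((2 * ?H * ?r) / (1 - ?r)) * ?r ^ m" by simp
    qed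
    hence "(\<lambda>m. c m - c (Suc m)) sums c 0" using telescope_sums' by fastforce
    moreover have "dterm q \<psi> x = (\<lambda>m. c m - c (Suc m))"
      using \<psi>_at[of "Suc _" x] \<psi>_at[of _ "shift x"]
      by (simp add: fun_eq_iff dterm_def c_def drop_prefix_shift)
    ultimately have "suminf (dterm q \<psi> x) = c 0" by (simp add: sums_iff)
    moreover have "\<psi> (tau 1 x q) = A x + V x 0 - V x (Suc 0)"
      using \<psi>_at[of 0 x] by (simp add: drop_prefix_0)
    ultimately show ?thesis by (simp add: dual_op_dterm c_def V_def drop_prefix_0 drop_prefix_1 drop_prefix_shift)
  qed
  have "(\<lambda>x. dual_op q (dual_op p A) x - A x) = (\<lambda>x. (\<lambda>y. - W p A y q) (shift x) - (\<lambda>y. - W p A y q) x)"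
    using key by (simp add: \<psi>_def fun_eq_iff)
  thus ?thesis unfolding coboundaries_def
    by (intro CollectI exI[of _ "\<lambda>y. - W p A y q"] conjI W_holder[OF l a A])
qed

section \<open>Continuity and the induced maps on the quotients\<close>

lemma small_of_bounded_by:
  fixes f g :: "'b \<Rightarrow> real"
  assumes K: "0 < K" and bound: "\<And>x. x \<in> S \<Longrightarrow> f x \<le> K * g x" and e: "0 < e"
  shows "\<exists>d>0. \<forall>x\<in>S. g x < d \<longrightarrow> f x < e"
proof (intro exI[of _ "e / K"] conjI ballI impI)
  show "0 < e / K" using K e by simp
  fix x assume "x \<in> S" "g x < e / K"
  hence "f x < K * (e / K)" using bound[of x] K by (meson mult_strict_left_mono order_le_less_trans)
  thus "f x < e" using K by simp
qed

lemma dual_op_continuous: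
  fixes A :: "(nat \<Rightarrow> 'a) \<Rightarrow> real"
  assumes l: "0 < lam" "lam < 1" and a: "0 < al" and A: "A \<in> holder_space lam al" and e: "0 < e"
  shows "\<exists>d>0. \<forall>A' \<in> holder_space lam al. holder_norm lam al (\<lambda>x. A' x - A x) < d \<longrightarrow>
    holder_norm lam al (\<lambda>x. dual_op p A' x - dual_op p A x) < e"
proof (rule small_of_bounded_by[OF dual_bound_pos[OF l a] _ e])
  fix A' :: "(nat \<Rightarrow> 'a) \<Rightarrow> real" assume A': "A' \<in> holder_space lam al"
  show "holder_norm lam al (\<lambda>x. dual_op p A' x - dual_op p A x)
      \<le> dual_bound lam al * holder_norm lam al (\<lambda>x. A' x - A x)"
    using dual_op_holder[OF l a holder_diff[OF l a A' A], of p] by (simp add: dual_op_diff[OF l a A' A])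
qed

lemma dual_op_cohomologous:
  assumes l: "0 < lam" "lam < 1" and a: "0 < al"
    and A: "A \<in> holder_space lam al" and A': "A' \<in> holder_space lam al"
    and cob: "(\<lambda>x. A' x - A x) \<in> coboundaries lam al"
  shows "(\<lambda>x. dual_op p A' x - dual_op p A x) \<in> coboundaries lam al"
  using dual_op_coboundaries[OF l a cob, of p] zero_coboundary[OF l a]
  by (simp add: dual_op_diff[OF l a A' A, symmetric])

text \<open>Since dual_op p kills coboundaries, its norm bound passes to the quotient norms.\<close>
lemma quot_norm_dual_op_le:
  fixes z :: "(nat \<Rightarrow> 'a) \<Rightarrow> real"
  assumes l: "0 < lam" "lam < 1" and a: "0 < al" and z: "z \<in> holder_space lam al"
  shows "quot_norm lam al (coboundaries lam al) (dual_op p z)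
    \<le> dual_bound lam al * quot_norm lam al (coboundaries lam al) z"
proof -
  let ?B = "coboundaries lam al" and ?K = "dual_bound lam al"
  define S where "S = {holder_norm lam al (\<lambda>x. z x + b x) | b. b \<in> ?B}"
  define S' where "S' = {holder_norm lam al (\<lambda>x. dual_op p z x + b x) | b. b \<in> ?B}"
  have K: "0 < ?K" by (rule dual_bound_pos[OF l a])
  have Lz: "dual_op p z \<in> holder_space lam al" using dual_op_holder[OF l a z] by simp
  have "bdd_below S'" unfolding S'_def
    using holder_norm_nonneg[OF holder_add[OF l a Lz coboundary_holder[OF l a]]]
    by (intro bdd_belowI[of _ 0]) blast
  moreover have "holder_norm lam al (\<lambda>x. dual_op p z x + 0) \<in> S'"
    unfolding S'_def by (intro CollectI exI[of _ "\<lambda>x. 0"] conjI zero_coboundary[OF l a]) simp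
  ultimately have upper: "quot_norm lam al ?B (dual_op p z) \<le> holder_norm lam al (dual_op p z)"
    unfolding quot_norm_def S'_def[symmetric] by (simp add: cInf_lower)
  have "holder_norm lam al (dual_op p z) / ?K \<le> Inf S"
  proof (rule cInf_greatest)
    show "S \<noteq> {}" unfolding S_def using zero_coboundary[OF l a] by blast
    fix v assume "v \<in> S"
    then obtain b where v: "v = holder_norm lam al (\<lambda>x. z x + b x)" and b: "b \<in> ?B"
      unfolding S_def by blast
    have bh: "b \<in> holder_space lam al" by (rule coboundary_holder[OF l a b])
    have "dual_op p (\<lambda>x. z x + b x) = dual_op p z"
      using dual_op_add[OF l a z bh, of p] dual_op_coboundaries[OF l a b, of p] by simp
    thus "holder_norm lam al (dual_op p z) / ?K \<le> v"
      using dual_op_holder[OF l a holder_add[OF l a z bh], of p] v K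
      by (simp add: divide_le_eq mult.commute)
  qed
  hence "holder_norm lam al (dual_op p z) \<le> ?K * quot_norm lam al ?B z"
    unfolding quot_norm_def S_def[symmetric] using K by (simp add: divide_le_eq mult.commute)
  with upper show ?thesis by linarith
qed

lemma dual_op_quot_continuous:
  fixes A :: "(nat \<Rightarrow> 'a) \<Rightarrow> real"
  assumes l: "0 < lam" "lam < 1" and a: "0 < al" and A: "A \<in> holder_space lam al" and e: "0 < e"
  shows "\<exists>d>0. \<forall>A' \<in> holder_space lam al.
    quot_norm lam al (coboundaries lam al) (\<lambda>x. A' x - A x) < d \<longrightarrow>
    quot_norm lam al (coboundaries lam al) (\<lambda>x. dual_op p A' x - dual_op p A x) < e"
proof (rule small_of_bounded_by[OF dual_bound_pos[OF l a] _ e])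
  fix A' :: "(nat \<Rightarrow> 'a) \<Rightarrow> real" assume A': "A' \<in> holder_space lam al"
  show "quot_norm lam al (coboundaries lam al) (\<lambda>x. dual_op p A' x - dual_op p A x)
      \<le> dual_bound lam al * quot_norm lam al (coboundaries lam al) (\<lambda>x. A' x - A x)"
    using quot_norm_dual_op_le[OF l a holder_diff[OF l a A' A], of p]
    by (simp add: dual_op_diff[OF l a A' A])
qed

theorem mainTheorem19:
  fixes lam al :: real and xbar wbar :: "nat \<Rightarrow> 'a::finite"
  assumes "0 < lam" and "lam < 1" and "0 < al"
  shows "(\<forall>A \<in> holder_space lam al. dual_op xbar A \<in> holder_space lam al)
   \<and> (\<forall>A \<in> holder_space lam al. \<forall>A' \<in> holder_space lam al. \<forall>a b::real.
       dual_op xbar (\<lambda>x. a * A x + b * A' x) = (\<lambda>w. a * dual_op xbar A w + b * dual_op xbar A' w))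
   \<and> (\<forall>A \<in> holder_space lam al. \<forall>\<epsilon>>0. \<exists>\<delta>>0. \<forall>A' \<in> holder_space lam al.
       holder_norm lam al (\<lambda>x. A' x - A x) < \<delta> \<longrightarrow>
       holder_norm lam al (\<lambda>x. (dual_op xbar A') x - (dual_op xbar A) x) < \<epsilon>)
   \<and> (\<forall>b \<in> coboundaries lam al. dual_op xbar b = (\<lambda>x. 0))
   \<and> (\<forall>A \<in> holder_space lam al. \<forall>A' \<in> holder_space lam al.
       (\<lambda>x. A' x - A x) \<in> coboundaries lam al \<longrightarrow> (\<lambda>x. dual_op xbar A' x - dual_op xbar A x) \<in> coboundaries lam al)
   \<and> (\<forall>A \<in> holder_space lam al. \<forall>\<epsilon>>0. \<exists>\<delta>>0. \<forall>A' \<in> holder_space lam al.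
       quot_norm lam al (coboundaries lam al) (\<lambda>x. A' x - A x) < \<delta> \<longrightarrow>
       quot_norm lam al (coboundaries lam al) (\<lambda>x. (dual_op xbar A') x - (dual_op xbar A) x) < \<epsilon>)
   \<and> (\<forall>\<psi> \<in> holder_space lam al. dual_op wbar \<psi> \<in> holder_space lam al)
   \<and> (\<forall>\<psi> \<in> holder_space lam al. \<forall>\<psi>' \<in> holder_space lam al. \<forall>a b::real.
       dual_op wbar (\<lambda>x. a * \<psi> x + b * \<psi>' x) = (\<lambda>w. a * dual_op wbar \<psi> w + b * dual_op wbar \<psi>' w))
   \<and> (\<forall>\<psi> \<in> holder_space lam al. \<forall>\<epsilon>>0. \<exists>\<delta>>0. \<forall>\<psi>' \<in> holder_space lam al.
       holder_norm lam al (\<lambda>x. \<psi>' x - \<psi> x) < \<delta> \<longrightarrow>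
       holder_norm lam al (\<lambda>x. (dual_op wbar \<psi>') x - (dual_op wbar \<psi>) x) < \<epsilon>)
   \<and> (\<forall>\<psi> \<in> holder_space lam al. \<forall>\<psi>' \<in> holder_space lam al.
       (\<lambda>x. \<psi>' x - \<psi> x) \<in> coboundaries lam al \<longrightarrow> (\<lambda>x. dual_op wbar \<psi>' x - dual_op wbar \<psi> x) \<in> coboundaries lam al)
   \<and> (\<forall>\<psi> \<in> holder_space lam al. \<forall>\<epsilon>>0. \<exists>\<delta>>0. \<forall>\<psi>' \<in> holder_space lam al.
       quot_norm lam al (coboundaries lam al) (\<lambda>x. \<psi>' x - \<psi> x) < \<delta> \<longrightarrow>
       quot_norm lam al (coboundaries lam al) (\<lambda>x. (dual_op wbar \<psi>') x - (dual_op wbar \<psi>) x) < \<epsilon>)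
   \<and> (\<forall>A \<in> holder_space lam al. (\<lambda>x. dual_op wbar (dual_op xbar A) x - A x) \<in> coboundaries lam al)
   \<and> (\<forall>\<psi> \<in> holder_space lam al. (\<lambda>x. dual_op xbar (dual_op wbar \<psi>) x - \<psi> x) \<in> coboundaries lam al)"
  by (intro conjI ballI allI impI)
     (simp_all add: dual_op_holder[OF assms] dual_op_lin[OF assms] dual_op_continuous[OF assms]
       dual_op_coboundaries[OF assms] dual_op_cohomologous[OF assms]
       dual_op_quot_continuous[OF assms] dual_op_inverse[OF assms])

end
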